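(* Let $F\colon\mathbb{N}\to(0,\infty)$ be strictly monotone with $\sum_{k=1}^\infty1/F(k)<\infty$, and let $\Xi$ be the birth process with rate function $F$ and initial value $\Xi(0)\in\mathbb{N}$, with sojourn times $\tau(k)$ and explosion time $T$. Then for all $x\ge\Xi(0)$, $$\mathbb{P}(\Xi(t)>x\mid T>t)\to1-\prod_{k=x+1}^\infty\Big(1-\frac{F(\Xi(0))}{F(k)}\Big)\in(0,1)\quad\text{as }t\to\infty.$$ Moreover, there are constants $C<\infty$ and $t_1$ such that for all $t\ge t_1$ and all $s>0$, $$\mathbb{P}\big(T-\tau(\Xi(0))>s\mid T>t\big)\le C\,e^{-(F(\Xi(0)+1)-F(\Xi(0)))s}.$$
   Context: $\mathbb{N}=\{1,2,\dots\}$. The sojourn times $\tau(k)$, $k\ge\Xi(0)$, are independent, $\tau(k)$ exponential with rate $F(k)$; $\Xi(t)=\min\{k:\sum_{l=\Xi(0)}^k\tau(l)>t\}$ (min of empty set $=\infty$) and $T=\sum_{k\ge\Xi(0)}\tau(k)$. *)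

theory Defs
  imports "HOL-Probability.Probability"
begin

definition cprob :: "'a measure \<Rightarrow> 'a set \<Rightarrow> 'a set \<Rightarrow> real" where
  "cprob M A B = measure M (A \<inter> B) / measure M B"

definition birth_Xi :: "nat \<Rightarrow> (nat \<Rightarrow> 'a \<Rightarrow> real) \<Rightarrow> real \<Rightarrow> 'a \<Rightarrow> enat" where
  "birth_Xi n0 \<tau> t \<omega> =
     (if \<exists>k\<ge>n0. (\<Sum>l=n0..k. \<tau> l \<omega>) > t
      then enat (LEAST k. k \<ge> n0 \<and> (\<Sum>l=n0..k. \<tau> l \<omega>) > t) else \<infinity>)"

definition birth_T :: "nat \<Rightarrow> (nat \<Rightarrow> 'a \<Rightarrow> real) \<Rightarrow> 'a \<Rightarrow> ennreal" where
  "birth_T n0 \<tau> \<omega> = (\<Sum>j. ennreal (\<tau> (n0 + j) \<omega>))"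

end

theory Submission
  imports Defs
begin

text \<open>
  Write \<open>\<sigma>\<^sub>j\<close> for the sojourn time in state \<open>\<Xi>(0) + j\<close> and \<open>G\<^sub>j\<close> for its rate,
  and integrate out the exponential variable \<open>\<sigma>\<^sub>0\<close>, which is independent of
  \<open>W = \<sigma>\<^sub>1 + ... + \<sigma>\<^sub>n\<close>:
  \<open>e^(G\<^sub>0 t) P(\<sigma>\<^sub>0 + W > t) = E[min(e^(G\<^sub>0 t), e^(G\<^sub>0 W))]\<close>.
  As \<open>t \<rightarrow> \<infinity>\<close> this tends to \<open>E[e^(G\<^sub>0 W)] = \<Prod>\<^sub>j\<^sub>=\<^sub>1\<^sup>n G\<^sub>j / (G\<^sub>j - G\<^sub>0)\<close>,
  and letting \<open>n \<rightarrow> \<infinity>\<close>, \<open>e^(G\<^sub>0 t) P(T > t)\<close> tends to the infinite product, which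
  is finite because \<open>\<Sum> 1/G\<^sub>j < \<infinity>\<close>. Since \<open>\<Xi>(t) > x\<close> means \<open>\<sigma>\<^sub>0 + ... + \<sigma>\<^sub>n \<le> t\<close>
  for \<open>x = \<Xi>(0) + n\<close>, the conditional probability is one minus the ratio of the two
  limits. For the second claim, integrating out \<open>\<sigma>\<^sub>0\<close> bounds \<open>P(T - \<sigma>\<^sub>0 > s, T > t)\<close> by
  \<open>e^(-G\<^sub>0 t) E[1{Y > s} e^(G\<^sub>0 Y)]\<close> with \<open>Y = T - \<sigma>\<^sub>0\<close>; integrating out \<open>\<sigma>\<^sub>1\<close> in
  the latter produces the factor \<open>e^(-(G\<^sub>1 - G\<^sub>0) s)\<close>, and \<open>P(T > t) \<ge> P(\<sigma>\<^sub>0 > t) = e^(-G\<^sub>0 t)\<close>.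
\<close>

lemma ennreal_max_0: "ennreal (max 0 x) = ennreal x"
  by (simp add: max_def ennreal_neg)

lemma nn_integral_exponential_density_indicator_exp:
  fixes \<mu> \<nu> a :: real
  assumes \<mu>: "0 < \<mu>" and \<nu>: "\<nu> < \<mu>"
  shows "(\<integral>\<^sup>+e. ennreal (exponential_density \<mu> e) * (indicator {a<..} e * ennreal (exp (\<nu> * e))) \<partial>lborel)
         = ennreal (\<mu> / (\<mu> - \<nu>) * exp (- (\<mu> - \<nu>) * max 0 a))"
proof -
  define b where "b = max 0 a"
  have "(\<integral>\<^sup>+e. ennreal (exponential_density \<mu> e) * (indicator {a<..} e * ennreal (exp (\<nu> * e))) \<partial>lborel)
      = (\<integral>\<^sup>+e. ennreal (indicator {b..} e * (\<mu> * exp (- (\<mu> - \<nu>) * e))) \<partial>lborel)"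
    using AE_lborel_singleton[of b]
  proof (intro nn_integral_cong_AE, eventually_elim)
    case (elim e)
    have "exp (- \<mu> * e) * exp (\<nu> * e) = exp (- (\<mu> - \<nu>) * e)"
      by (simp add: exp_add[symmetric] algebra_simps)
    then show ?case
      using elim \<mu>
      by (auto simp: exponential_density_def erlang_density_def b_def indicator_def
          ennreal_mult[symmetric] max_def mult.assoc split: if_splits)
  qed
  also have "\<dots> = ennreal (\<mu> * (exp (- (\<mu> - \<nu>) * b) / (\<mu> - \<nu>)))"
  proof -
    have "((\<lambda>x. \<mu> * exp (- (\<mu> - \<nu>) * x)) has_integral \<mu> * (exp (- (\<mu> - \<nu>) * b) / (\<mu> - \<nu>))) {b..}"
      using has_integral_exp_minus_to_infinity[of "\<mu> - \<nu>" b] \<nu>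
      by (intro has_integral_mult_right) simp
    from nn_integral_has_integral_lebesgue[OF _ this] \<mu> show ?thesis
      by (simp add: ennreal_indicator[symmetric] ennreal_mult'')
  qed
  finally show ?thesis
    by (simp add: b_def)
qed

lemma (in prob_space) nn_integral_exp_exponential:
  assumes X: "distributed M lborel X (exponential_density \<mu>)" and "0 < \<mu>" "\<nu> < \<mu>"
  shows "(\<integral>\<^sup>+\<omega>. ennreal (exp (\<nu> * X \<omega>)) \<partial>M) = ennreal (\<mu> / (\<mu> - \<nu>))"
proof -
  have "(\<integral>\<^sup>+\<omega>. ennreal (exp (\<nu> * X \<omega>)) \<partial>M)
      = (\<integral>\<^sup>+e. ennreal (exponential_density \<mu> e) * ennreal (exp (\<nu> * e)) \<partial>lborel)"
    by (rule distributed_nn_integral[OF X, symmetric]) simp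
  also have "\<dots> = (\<integral>\<^sup>+e. ennreal (exponential_density \<mu> e) * (indicator {-1<..} e * ennreal (exp (\<nu> * e))) \<partial>lborel)"
    by (intro nn_integral_cong) (auto simp: exponential_density_def erlang_density_def indicator_def)
  finally show ?thesis
    using nn_integral_exponential_density_indicator_exp[of \<mu> \<nu> "-1"] assms(2,3) by simp
qed

lemma (in prob_space) exponential_distributed_max_0:
  assumes X: "distributed M lborel X (exponential_density l)" and l: "0 < l"
  shows "distributed M lborel (\<lambda>\<omega>. max 0 (X \<omega>)) (exponential_density l)"
  using X unfolding exponential_distributed_iff[OF l] by auto

lemma (in prob_space) exponential_distributed_AE_nonneg:
  assumes X: "distributed M lborel X (exponential_density l)"
  shows "AE \<omega> in M. 0 \<le> X \<omega>"
  by (subst distributed_AE2[OF X]) (auto simp: exponential_density_def erlang_density_def)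

lemma (in prob_space) nn_integral_indep_var_distributed:
  assumes indep: "indep_var borel X borel V" and X: "distributed M lborel X f"
    and g[measurable]: "g \<in> borel_measurable (borel \<Otimes>\<^sub>M borel)"
  shows "(\<integral>\<^sup>+\<omega>. g (X \<omega>, V \<omega>) \<partial>M) = (\<integral>\<^sup>+\<omega>. (\<integral>\<^sup>+e. f e * g (e, V \<omega>) \<partial>lborel) \<partial>M)"
proof -
  have [measurable]: "X \<in> borel_measurable M" "V \<in> borel_measurable M"
    using indep_var_rv1[OF indep] indep_var_rv2[OF indep] by auto
  interpret D1: prob_space "distr M borel X" by (rule prob_space_distr) simp
  interpret D2: prob_space "distr M borel V" by (rule prob_space_distr) simp
  interpret P: pair_sigma_finite "distr M borel X" "distr M borel V" ..
  have "(\<integral>\<^sup>+\<omega>. g (X \<omega>, V \<omega>) \<partial>M) = (\<integral>\<^sup>+p. g p \<partial>distr M (borel \<Otimes>\<^sub>M borel) (\<lambda>\<omega>. (X \<omega>, V \<omega>)))"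
    by (subst nn_integral_distr) auto
  also have "\<dots> = (\<integral>\<^sup>+p. g p \<partial>(distr M borel X \<Otimes>\<^sub>M distr M borel V))"
    using indep indep_var_distribution_eq by metis
  also have "\<dots> = (\<integral>\<^sup>+v. (\<integral>\<^sup>+e. g (e, v) \<partial>distr M borel X) \<partial>distr M borel V)"
    by (rule P.nn_integral_snd[symmetric]) simp
  also have "\<dots> = (\<integral>\<^sup>+\<omega>. (\<integral>\<^sup>+e. g (e, V \<omega>) \<partial>distr M borel X) \<partial>M)"
    by (subst nn_integral_distr) auto
  also have "\<dots> = (\<integral>\<^sup>+\<omega>. (\<integral>\<^sup>+e. f e * g (e, V \<omega>) \<partial>lborel) \<partial>M)"
    by (intro nn_integral_cong)
      (simp add: nn_integral_distr distributed_nn_integral[OF X])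
  finally show ?thesis .
qed

lemma (in prob_space) nn_integral_exponential_add_indep:
  assumes X: "distributed M lborel X (exponential_density \<mu>)" and indep: "indep_var borel X borel V"
    and \<mu>: "0 < \<mu>" "\<nu> < \<mu>" and h[measurable]: "h \<in> borel_measurable borel"
  shows "(\<integral>\<^sup>+\<omega>. h (V \<omega>) * indicator {a<..} (X \<omega> + V \<omega>) * ennreal (exp (\<nu> * (X \<omega> + V \<omega>))) \<partial>M)
       = (\<integral>\<^sup>+\<omega>. h (V \<omega>) * ennreal (\<mu> / (\<mu> - \<nu>) * exp (- (\<mu> - \<nu>) * max 0 (a - V \<omega>)) * exp (\<nu> * V \<omega>)) \<partial>M)"
proof -
  define g where "g p = h (snd p) * indicator {a<..} (fst p + snd p) * ennreal (exp (\<nu> * (fst p + snd p)))"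
    for p :: "real \<times> real"
  have [measurable]: "g \<in> borel_measurable (borel \<Otimes>\<^sub>M borel)"
    unfolding g_def by measurable
  have "(\<integral>\<^sup>+\<omega>. h (V \<omega>) * indicator {a<..} (X \<omega> + V \<omega>) * ennreal (exp (\<nu> * (X \<omega> + V \<omega>))) \<partial>M)
      = (\<integral>\<^sup>+\<omega>. g (X \<omega>, V \<omega>) \<partial>M)"
    by (simp add: g_def)
  also have "\<dots> = (\<integral>\<^sup>+\<omega>. (\<integral>\<^sup>+e. ennreal (exponential_density \<mu> e) * g (e, V \<omega>) \<partial>lborel) \<partial>M)"
    by (rule nn_integral_indep_var_distributed[OF indep X]) measurable
  also have "\<dots> = (\<integral>\<^sup>+\<omega>. h (V \<omega>) * ennreal (\<mu> / (\<mu> - \<nu>) * exp (- (\<mu> - \<nu>) * max 0 (a - V \<omega>)) * exp (\<nu> * V \<omega>)) \<partial>M)"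
  proof (intro nn_integral_cong)
    fix \<omega>
    define v where "v = V \<omega>"
    have "(\<integral>\<^sup>+e. ennreal (exponential_density \<mu> e) * g (e, v) \<partial>lborel)
        = (\<integral>\<^sup>+e. ennreal (exponential_density \<mu> e) * (indicator {a - v<..} e * ennreal (exp (\<nu> * e)))
             * (h v * ennreal (exp (\<nu> * v))) \<partial>lborel)"
      by (intro nn_integral_cong)
        (auto simp: g_def indicator_def distrib_left exp_add ennreal_mult' mult_ac)
    also have "\<dots> = (\<integral>\<^sup>+e. ennreal (exponential_density \<mu> e) * (indicator {a - v<..} e * ennreal (exp (\<nu> * e))) \<partial>lborel)
        * (h v * ennreal (exp (\<nu> * v)))"
      by (rule nn_integral_multc) simp
    also have "\<dots> = h v * (ennreal (\<mu> / (\<mu> - \<nu>) * exp (- (\<mu> - \<nu>) * max 0 (a - v))) * ennreal (exp (\<nu> * v)))"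
      unfolding nn_integral_exponential_density_indicator_exp[OF \<mu>] by (simp only: mult_ac)
    finally show "(\<integral>\<^sup>+e. ennreal (exponential_density \<mu> e) * g (e, V \<omega>) \<partial>lborel)
        = h (V \<omega>) * ennreal (\<mu> / (\<mu> - \<nu>) * exp (- (\<mu> - \<nu>) * max 0 (a - V \<omega>)) * exp (\<nu> * V \<omega>))"
      by (simp only: v_def ennreal_mult''[symmetric] exp_ge_zero)
  qed
  finally show ?thesis .
qed

lemma (in prob_space) emeasure_exponential_add_indep_gt:
  assumes X: "distributed M lborel X (exponential_density \<mu>)" and indep: "indep_var borel X borel V"
    and "0 < \<mu>" and B[measurable]: "B \<in> sets borel"
  shows "emeasure M {\<omega>\<in>space M. V \<omega> \<in> B \<and> a < X \<omega> + V \<omega>}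
       = (\<integral>\<^sup>+\<omega>. indicator B (V \<omega>) * ennreal (exp (- \<mu> * max 0 (a - V \<omega>))) \<partial>M)"
proof -
  have [measurable]: "X \<in> borel_measurable M" "V \<in> borel_measurable M"
    using indep_var_rv1[OF indep] indep_var_rv2[OF indep] by auto
  have "emeasure M {\<omega>\<in>space M. V \<omega> \<in> B \<and> a < X \<omega> + V \<omega>}
      = (\<integral>\<^sup>+\<omega>. indicator {\<omega>\<in>space M. V \<omega> \<in> B \<and> a < X \<omega> + V \<omega>} \<omega> \<partial>M)"
    by (rule nn_integral_indicator[symmetric]) measurable
  also have "\<dots> = (\<integral>\<^sup>+\<omega>. indicator B (V \<omega>) * indicator {a<..} (X \<omega> + V \<omega>) * ennreal (exp (0 * (X \<omega> + V \<omega>))) \<partial>M)"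
    by (intro nn_integral_cong) (simp add: indicator_def)
  also have "\<dots> = (\<integral>\<^sup>+\<omega>. indicator B (V \<omega>) * ennreal (exp (- \<mu> * max 0 (a - V \<omega>))) \<partial>M)"
    using nn_integral_exponential_add_indep[OF X indep, of 0 "indicator B" a] assms(3) by simp
  finally show ?thesis .
qed

lemma (in prob_space) nn_integral_exp_sum_indep_exponential:
  assumes K: "finite K" and indep: "indep_vars (\<lambda>_. borel) X K"
    and X: "\<And>j. j \<in> K \<Longrightarrow> distributed M lborel (X j) (exponential_density (\<mu> j))"
    and \<mu>: "\<And>j. j \<in> K \<Longrightarrow> 0 < \<mu> j" "\<And>j. j \<in> K \<Longrightarrow> \<nu> < \<mu> j"
  shows "(\<integral>\<^sup>+\<omega>. ennreal (exp (\<nu> * (\<Sum>j\<in>K. X j \<omega>))) \<partial>M) = (\<Prod>j\<in>K. ennreal (\<mu> j / (\<mu> j - \<nu>)))"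
proof -
  have "(\<integral>\<^sup>+\<omega>. ennreal (exp (\<nu> * (\<Sum>j\<in>K. X j \<omega>))) \<partial>M)
      = (\<integral>\<^sup>+\<omega>. (\<Prod>j\<in>K. ennreal (exp (\<nu> * X j \<omega>))) \<partial>M)"
    using K by (simp add: sum_distrib_left exp_sum prod_ennreal)
  also have "\<dots> = (\<Prod>j\<in>K. \<integral>\<^sup>+\<omega>. ennreal (exp (\<nu> * X j \<omega>)) \<partial>M)"
    using indep_vars_compose2[OF indep, of "\<lambda>j x. ennreal (exp (\<nu> * x))" "\<lambda>_. borel"]
    by (intro indep_vars_nn_integral K) auto
  also have "\<dots> = (\<Prod>j\<in>K. ennreal (\<mu> j / (\<mu> j - \<nu>)))"
    using nn_integral_exp_exponential[OF X] \<mu> by (intro prod.cong) auto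
  finally show ?thesis .
qed

lemma (in prob_space) indep_vars_reindex:
  assumes inj: "inj_on h I" and indep: "indep_vars M' X (h ` I)"
  shows "indep_vars (\<lambda>i. M' (h i)) (\<lambda>i. X (h i)) I"
  unfolding indep_vars_def2
proof (intro conjI ballI)
  fix i assume "i \<in> I"
  then show "random_variable (M' (h i)) (X (h i))"
    using indep unfolding indep_vars_def2 by auto
next
  let ?F = "\<lambda>j. {X j -` A \<inter> space M |A. A \<in> sets (M' j)}"
  have F: "indep_sets ?F (h ` I)"
    using indep unfolding indep_vars_def2 by blast
  show "indep_sets (\<lambda>i. {X (h i) -` A \<inter> space M |A. A \<in> sets (M' (h i))}) I"
    unfolding indep_sets_def
  proof (intro conjI ballI allI impI)
    fix i assume "i \<in> I"
    then show "{X (h i) -` A \<inter> space M |A. A \<in> sets (M' (h i))} \<subseteq> events"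
      using F unfolding indep_sets_def by auto
  next
    fix J A assume J: "J \<subseteq> I" "J \<noteq> {}" "finite J" and A: "A \<in> Pi J (\<lambda>i. ?F (h i))"
    have inj_J: "inj_on h J"
      using inj J(1) by (rule inj_on_subset)
    define A' where "A' j = A (the_inv_into J h j)" for j
    have A'_h: "A' (h i) = A i" if "i \<in> J" for i
      unfolding A'_def using the_inv_into_f_f[OF inj_J that] by simp
    have "A' \<in> Pi (h ` J) ?F"
    proof
      fix j assume "j \<in> h ` J"
      then obtain i where "i \<in> J" "j = h i"
        by blast
      then show "A' j \<in> ?F j"
        using A'_h Pi_mem[OF A] by simp
    qed
    moreover have "h ` J \<subseteq> h ` I" "h ` J \<noteq> {}" "finite (h ` J)"
      using J by auto
    ultimately have "prob (\<Inter>j\<in>h ` J. A' j) = (\<Prod>j\<in>h ` J. prob (A' j))"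
      using F unfolding indep_sets_def by blast
    then show "prob (\<Inter>i\<in>J. A i) = (\<Prod>i\<in>J. prob (A i))"
      using A'_h by (simp add: prod.reindex[OF inj_J])
  qed
qed

lemma (in finite_measure) measure_UN_incseq_le:
  assumes "range A \<subseteq> sets M" "incseq A" "\<And>n. measure M (A n) \<le> c"
  shows "measure M (\<Union>n. A n) \<le> c"
  using assms(3) by (intro LIMSEQ_le_const2[OF finite_Lim_measure_incseq[OF assms(1,2)]]) auto

text \<open>
  \<open>\<sigma> j\<close> plays the role of the sojourn time \<open>\<tau>(\<Xi>(0) + j)\<close> and \<open>G j\<close> its rate \<open>F(\<Xi>(0) + j)\<close>;
  \<open>tail_time 0\<close> is the explosion time \<open>T\<close> and \<open>tail_time 1\<close> is \<open>T - \<tau>(\<Xi>(0))\<close>.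
\<close>

locale exponential_sojourns = prob_space M for M :: "'a measure" +
  fixes G :: "nat \<Rightarrow> real" and \<sigma> :: "nat \<Rightarrow> 'a \<Rightarrow> real"
  assumes G_pos: "\<And>j. 0 < G j" and G_strict_mono: "strict_mono G"
    and summable_inverse_G: "summable (\<lambda>j. 1 / G j)"
    and \<sigma>_nonneg: "\<And>j \<omega>. 0 \<le> \<sigma> j \<omega>"
    and \<sigma>_indep: "indep_vars (\<lambda>_. borel) \<sigma> UNIV"
    and \<sigma>_exponential: "\<And>j. distributed M lborel (\<sigma> j) (exponential_density (G j))"
begin

definition psum :: "nat \<Rightarrow> nat \<Rightarrow> 'a \<Rightarrow> real" where
  "psum k n \<omega> = (\<Sum>j<n. \<sigma> (k + j) \<omega>)"

definition tail_time :: "nat \<Rightarrow> 'a \<Rightarrow> ennreal" where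
  "tail_time k \<omega> = (\<Sum>j. ennreal (\<sigma> (k + j) \<omega>))"

definition tail_prod :: "nat \<Rightarrow> real \<Rightarrow> real" where
  "tail_prod k \<nu> = (\<Prod>j. 1 - \<nu> / G (k + j))"

definition decay_const :: real where
  "decay_const = G 1 / (G 1 - G 0) / tail_prod 2 (G 1)"

lemma \<sigma>_measurable[measurable]: "\<sigma> j \<in> borel_measurable M"
  using distributed_measurable[OF \<sigma>_exponential] by simp

lemma psum_measurable[measurable]: "psum k n \<in> borel_measurable M"
  unfolding psum_def by measurable

lemma tail_time_measurable[measurable]: "tail_time k \<in> borel_measurable M"
  unfolding tail_time_def by measurable

lemma G_mono: "i \<le> j \<Longrightarrow> G i \<le> G j"
  using G_strict_mono by (rule strict_mono_leD)

lemma G_less: "i < j \<Longrightarrow> G i < G j"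
  using G_strict_mono by (rule strict_monoD)

lemma
  shows G_0_nonneg: "0 \<le> G 0" and G_0_less_G_1: "G 0 < G 1"
  using G_pos[of 0] by (auto intro: G_less)

lemma tail_factor_pos: "\<nu> < G k \<Longrightarrow> 0 < 1 - \<nu> / G (k + j)"
  using G_mono[of k "k + j"] G_pos[of "k + j"] by (simp add: field_simps)

lemma psum_Suc: "psum k (Suc n) \<omega> = \<sigma> k \<omega> + psum (Suc k) n \<omega>"
  unfolding psum_def sum.lessThan_Suc_shift by simp

lemma psum_mono: "n \<le> m \<Longrightarrow> psum k n \<omega> \<le> psum k m \<omega>"
  unfolding psum_def by (rule sum_mono2) (use \<sigma>_nonneg in auto)

lemma indep_var_psum: "indep_var borel (\<sigma> k) borel (psum (Suc k) n)"
proof -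
  have "psum (Suc k) n = (\<lambda>\<omega>. \<Sum>j\<in>(+) (Suc k) ` {..<n}. \<sigma> j \<omega>)"
    unfolding psum_def by (subst sum.reindex) auto
  then show ?thesis
    by (simp only:) (intro indep_vars_sum indep_vars_subset[OF \<sigma>_indep]; auto)
qed

lemma less_tail_time_iff:
  assumes "0 \<le> t"
  shows "ennreal t < tail_time k \<omega> \<longleftrightarrow> (\<exists>n. t < psum k n \<omega>)"
proof -
  have "tail_time k \<omega> = (SUP n. ennreal (psum k n \<omega>))"
    unfolding tail_time_def psum_def suminf_eq_SUP using \<sigma>_nonneg by simp
  then show ?thesis
    using assms by (simp add: less_SUP_iff ennreal_less_iff)
qed

lemma less_tail_time_iff_first:
  assumes "0 \<le> t"
  shows "ennreal t < tail_time k \<omega> \<longleftrightarrow> (\<exists>n. t < \<sigma> k \<omega> + psum (Suc k) n \<omega>)"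
  unfolding less_tail_time_iff[OF assms]
proof
  assume "\<exists>n. t < psum k n \<omega>"
  then obtain n where "t < psum k n \<omega>" ..
  moreover from this have "n \<noteq> 0"
    using assms by (cases n) (auto simp: psum_def)
  ultimately show "\<exists>n. t < \<sigma> k \<omega> + psum (Suc k) n \<omega>"
    by (metis psum_Suc not0_implies_Suc)
qed (auto simp flip: psum_Suc)

lemma
  assumes "0 \<le> \<nu>" "\<nu> < G k"
  shows has_prod_tail_prod: "(\<lambda>j. 1 - \<nu> / G (k + j)) has_prod tail_prod k \<nu>"
    and tail_prod_pos: "0 < tail_prod k \<nu>"
    and tail_prod_le: "tail_prod k \<nu> \<le> (\<Prod>j<n. 1 - \<nu> / G (k + j))"
proof -
  have factor_pos: "0 < 1 - \<nu> / G (k + j)" for j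
    using tail_factor_pos assms(2) .
  have "summable (\<lambda>j. \<nu> * (1 / G (j + k)))"
    using summable_ignore_initial_segment[OF summable_inverse_G, of k] by (intro summable_mult) simp
  then have "summable (\<lambda>j. norm (1 - \<nu> / G (k + j) - 1))"
    using assms G_pos by (simp add: add.commute abs_of_nonneg less_imp_le)
  then have conv: "convergent_prod (\<lambda>j. 1 - \<nu> / G (k + j))"
    by (intro abs_convergent_prod_imp_convergent_prod summable_imp_abs_convergent_prod)
  then show has_prod: "(\<lambda>j. 1 - \<nu> / G (k + j)) has_prod tail_prod k \<nu>"
    unfolding tail_prod_def by (simp add: convergent_prod_has_prod_iff)
  show "0 < tail_prod k \<nu>"
    unfolding tail_prod_def by (rule less_0_prodinf[OF conv factor_pos])
  show "tail_prod k \<nu> \<le> (\<Prod>j<n. 1 - \<nu> / G (k + j))"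
    unfolding tail_prod_def
    by (rule prod_ge_prodinf[OF has_prod[unfolded tail_prod_def]])
      (use factor_pos in \<open>auto intro: less_imp_le divide_nonneg_pos simp: assms G_pos\<close>)
qed

lemma tail_prod_less_1:
  assumes "0 < \<nu>" "\<nu> < G k"
  shows "tail_prod k \<nu> < 1"
proof -
  have "tail_prod k \<nu> \<le> 1 - \<nu> / G k"
    using tail_prod_le[of \<nu> k 1] assms by simp
  moreover have "0 < \<nu> / G k"
    using assms G_pos[of k] by simp
  ultimately show ?thesis
    by linarith
qed

lemma decay_const_pos: "0 < decay_const"
  using G_pos[of 1] G_less[of 0 1] G_less[of 1 2] tail_prod_pos[of "G 1" 2]
  unfolding decay_const_def by simp

lemma tail_prod_split:
  assumes "0 \<le> \<nu>" "\<nu> < G k"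
  shows "tail_prod k \<nu> = (\<Prod>j<n. 1 - \<nu> / G (k + j)) * tail_prod (k + n) \<nu>"
proof -
  have "1 - \<nu> / G (k + j) \<noteq> 0" for j
    using tail_factor_pos[OF assms(2)] by (metis less_irrefl)
  then show ?thesis
    using prodinf_split_initial_segment[OF has_prod_iff[THEN iffD1, OF has_prod_tail_prod[OF assms], THEN conjunct1], of n]
    unfolding tail_prod_def by (simp add: add.assoc add.commute[of n] mult.commute)
qed

lemma
  assumes "\<nu> < G k"
  shows integrable_exp_psum: "integrable M (\<lambda>\<omega>. exp (\<nu> * psum k n \<omega>))"
    and integral_exp_psum: "(\<integral>\<omega>. exp (\<nu> * psum k n \<omega>) \<partial>M) = 1 / (\<Prod>j<n. 1 - \<nu> / G (k + j))"
proof -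
  have factor_pos: "0 < 1 - \<nu> / G (k + j)" for j
    using tail_factor_pos assms .
  have ratio: "G (k + j) / (G (k + j) - \<nu>) = 1 / (1 - \<nu> / G (k + j))" for j
    using factor_pos[of j] G_pos[of "k + j"] by (simp add: field_simps)
  have "(\<integral>\<^sup>+\<omega>. ennreal (exp (\<nu> * psum k n \<omega>)) \<partial>M)
      = (\<integral>\<^sup>+\<omega>. ennreal (exp (\<nu> * (\<Sum>j\<in>(+) k ` {..<n}. \<sigma> j \<omega>))) \<partial>M)"
    unfolding psum_def by (subst sum.reindex) auto
  also have "\<dots> = (\<Prod>j\<in>(+) k ` {..<n}. ennreal (G j / (G j - \<nu>)))"
    using G_mono[of k] assms
    by (intro nn_integral_exp_sum_indep_exponential indep_vars_subset[OF \<sigma>_indep] \<sigma>_exponential G_pos)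
      (auto intro: less_le_trans)
  also have "\<dots> = (\<Prod>j<n. ennreal (1 / (1 - \<nu> / G (k + j))))"
    by (subst prod.reindex) (auto simp: ratio)
  also have "\<dots> = ennreal (1 / (\<Prod>j<n. 1 - \<nu> / G (k + j)))"
    using factor_pos by (simp add: prod_ennreal less_imp_le prod_dividef)
  finally have "(\<integral>\<^sup>+\<omega>. ennreal (exp (\<nu> * psum k n \<omega>)) \<partial>M) = ennreal (1 / (\<Prod>j<n. 1 - \<nu> / G (k + j)))" .
  moreover have "0 \<le> 1 / (\<Prod>j<n. 1 - \<nu> / G (k + j))"
    using factor_pos by (simp add: less_imp_le prod_pos)
  ultimately show "integrable M (\<lambda>\<omega>. exp (\<nu> * psum k n \<omega>))"
    and "(\<integral>\<omega>. exp (\<nu> * psum k n \<omega>) \<partial>M) = 1 / (\<Prod>j<n. 1 - \<nu> / G (k + j))"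
    by (simp_all add: nn_integral_eq_integrable)
qed

lemma ennreal_scaled_prob_first_plus_psum_gt:
  "ennreal (exp (G 0 * t) * prob {\<omega>\<in>space M. t < \<sigma> 0 \<omega> + psum 1 n \<omega>})
     = (\<integral>\<^sup>+\<omega>. ennreal (min (exp (G 0 * t)) (exp (G 0 * psum 1 n \<omega>))) \<partial>M)"
proof -
  have min_eq: "exp (G 0 * t) * exp (- G 0 * max 0 (t - v)) = min (exp (G 0 * t)) (exp (G 0 * v))" for v
  proof (cases "t \<le> v")
    case True
    then show ?thesis
      using G_pos[of 0] by (simp add: max_def mult_left_mono)
  next
    case False
    then have "exp (G 0 * t) * exp (- G 0 * (t - v)) = exp (G 0 * v)"
      by (simp add: exp_add[symmetric] algebra_simps)
    then show ?thesis
      using False G_pos[of 0] by (simp add: max_def mult_left_mono)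
  qed
  have "ennreal (exp (G 0 * t) * prob {\<omega>\<in>space M. t < \<sigma> 0 \<omega> + psum 1 n \<omega>})
      = ennreal (exp (G 0 * t)) * emeasure M {\<omega>\<in>space M. t < \<sigma> 0 \<omega> + psum 1 n \<omega>}"
    by (simp add: emeasure_eq_measure ennreal_mult')
  also have "emeasure M {\<omega>\<in>space M. t < \<sigma> 0 \<omega> + psum 1 n \<omega>}
      = (\<integral>\<^sup>+\<omega>. ennreal (exp (- G 0 * max 0 (t - psum 1 n \<omega>))) \<partial>M)"
    using emeasure_exponential_add_indep_gt[OF \<sigma>_exponential indep_var_psum[of 0 n] G_pos, where B=UNIV and a=t]
    by simp
  also have "ennreal (exp (G 0 * t)) * \<dots> = (\<integral>\<^sup>+\<omega>. ennreal (exp (G 0 * t)) * ennreal (exp (- G 0 * max 0 (t - psum 1 n \<omega>))) \<partial>M)"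
    by (rule nn_integral_cmult[symmetric]) measurable
  also have "\<dots> = (\<integral>\<^sup>+\<omega>. ennreal (min (exp (G 0 * t)) (exp (G 0 * psum 1 n \<omega>))) \<partial>M)"
    by (intro nn_integral_cong) (simp only: min_eq ennreal_mult[symmetric] exp_ge_zero)
  finally show ?thesis .
qed

lemma scaled_prob_first_plus_psum_gt_le:
  "exp (G 0 * t) * prob {\<omega>\<in>space M. t < \<sigma> 0 \<omega> + psum 1 n \<omega>} \<le> 1 / tail_prod 1 (G 0)"
proof -
  have "ennreal (exp (G 0 * t) * prob {\<omega>\<in>space M. t < \<sigma> 0 \<omega> + psum 1 n \<omega>})
      \<le> (\<integral>\<^sup>+\<omega>. ennreal (exp (G 0 * psum 1 n \<omega>)) \<partial>M)"
    unfolding ennreal_scaled_prob_first_plus_psum_gt by (intro nn_integral_mono) simp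
  also have "\<dots> = ennreal (1 / (\<Prod>j<n. 1 - G 0 / G (1 + j)))"
    using integrable_exp_psum[OF G_0_less_G_1] integral_exp_psum[OF G_0_less_G_1]
    by (simp add: nn_integral_eq_integral)
  also have "\<dots> \<le> ennreal (1 / tail_prod 1 (G 0))"
    using tail_prod_pos[of "G 0" 1] tail_prod_le[of "G 0" 1 n] G_pos[of 0] G_0_less_G_1
    by (intro ennreal_leI divide_left_mono) auto
  finally show ?thesis
    using tail_prod_pos[of "G 0" 1] G_pos[of 0] G_0_less_G_1 by (simp add: ennreal_le_iff)
qed

lemma scaled_prob_first_plus_psum_gt_tendsto:
  "((\<lambda>t. exp (G 0 * t) * prob {\<omega>\<in>space M. t < \<sigma> 0 \<omega> + psum 1 n \<omega>})
     \<longlongrightarrow> 1 / (\<Prod>j<n. 1 - G 0 / G (1 + j))) at_top"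
proof -
  let ?f = "\<lambda>t \<omega>. min (exp (G 0 * t)) (exp (G 0 * psum 1 n \<omega>))"
  have "integrable M (?f t)" for t
    by (intro integrable_const_bound[where B="exp (G 0 * t)"]) auto
  then have eq: "exp (G 0 * t) * prob {\<omega>\<in>space M. t < \<sigma> 0 \<omega> + psum 1 n \<omega>} = (\<integral>\<omega>. ?f t \<omega> \<partial>M)" for t
    using ennreal_scaled_prob_first_plus_psum_gt[of t n]
    by (simp add: nn_integral_eq_integral integral_nonneg_AE)
  have "((\<lambda>t. \<integral>\<omega>. ?f t \<omega> \<partial>M) \<longlongrightarrow> (\<integral>\<omega>. exp (G 0 * psum 1 n \<omega>) \<partial>M)) at_top"
  proof (rule integral_dominated_convergence_at_top[where w="\<lambda>\<omega>. exp (G 0 * psum 1 n \<omega>)"])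
    show "integrable M (\<lambda>\<omega>. exp (G 0 * psum 1 n \<omega>))"
      by (rule integrable_exp_psum[OF G_0_less_G_1])
    show "AE \<omega> in M. ((\<lambda>t. ?f t \<omega>) \<longlongrightarrow> exp (G 0 * psum 1 n \<omega>)) at_top"
    proof (intro AE_I2 tendsto_eventually)
      fix \<omega>
      show "\<forall>\<^sub>F t in at_top. ?f t \<omega> = exp (G 0 * psum 1 n \<omega>)"
        using eventually_ge_at_top[of "psum 1 n \<omega>"]
        by eventually_elim (use G_pos[of 0] in \<open>simp add: mult_left_mono\<close>)
    qed
  qed auto
  then show ?thesis
    unfolding eq integral_exp_psum[OF G_0_less_G_1] .
qed

lemma prob_tail_time_gt_ge:
  assumes "0 \<le> t"
  shows "exp (- G 0 * t) \<le> prob {\<omega>\<in>space M. ennreal t < tail_time 0 \<omega>}"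
proof -
  have "{\<omega>\<in>space M. t < \<sigma> 0 \<omega>} \<subseteq> {\<omega>\<in>space M. ennreal t < tail_time 0 \<omega>}"
    using less_tail_time_iff[OF assms, of 0] psum_Suc[of 0 0] by (auto simp: psum_def intro: exI[of _ 1])
  then have "prob {\<omega>\<in>space M. t < \<sigma> 0 \<omega>} \<le> prob {\<omega>\<in>space M. ennreal t < tail_time 0 \<omega>}"
    by (intro finite_measure_mono) measurable
  then show ?thesis
    using exponential_distributedD_gt[OF \<sigma>_exponential assms G_pos] by (simp add: mult.commute)
qed

lemma scaled_prob_tail_time_gt_le:
  assumes "0 \<le> t"
  shows "exp (G 0 * t) * prob {\<omega>\<in>space M. ennreal t < tail_time 0 \<omega>} \<le> 1 / tail_prod 1 (G 0)"
proof -
  define A where "A n = {\<omega>\<in>space M. t < \<sigma> 0 \<omega> + psum 1 n \<omega>}" for n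
  have "range A \<subseteq> sets M"
    unfolding A_def by auto
  moreover have "incseq A"
    unfolding incseq_def A_def using psum_mono by (auto intro: less_le_trans)
  moreover have "measure M (A n) \<le> exp (- G 0 * t) * (1 / tail_prod 1 (G 0))" for n
    using scaled_prob_first_plus_psum_gt_le[of t n] tail_prod_pos[OF G_0_nonneg G_0_less_G_1]
    by (simp add: A_def exp_minus field_simps)
  ultimately have "measure M (\<Union>n. A n) \<le> exp (- G 0 * t) * (1 / tail_prod 1 (G 0))"
    by (rule measure_UN_incseq_le)
  moreover have "(\<Union>n. A n) = {\<omega>\<in>space M. ennreal t < tail_time 0 \<omega>}"
    unfolding A_def using less_tail_time_iff_first[OF assms, of 0] by auto
  ultimately show ?thesis
    using tail_prod_pos[OF G_0_nonneg G_0_less_G_1] by (simp add: exp_minus field_simps)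
qed

lemma scaled_prob_tail_time_gt_tendsto:
  "((\<lambda>t. exp (G 0 * t) * prob {\<omega>\<in>space M. ennreal t < tail_time 0 \<omega>}) \<longlongrightarrow> 1 / tail_prod 1 (G 0)) at_top"
proof (rule increasing_tendsto)
  show "\<forall>\<^sub>F t in at_top. exp (G 0 * t) * prob {\<omega>\<in>space M. ennreal t < tail_time 0 \<omega>} \<le> 1 / tail_prod 1 (G 0)"
    using eventually_ge_at_top[of 0] by eventually_elim (rule scaled_prob_tail_time_gt_le)
next
  fix a assume "a < 1 / tail_prod 1 (G 0)"
  moreover have "(\<lambda>n. 1 / (\<Prod>j<n. 1 - G 0 / G (1 + j))) \<longlonglongrightarrow> 1 / tail_prod 1 (G 0)"
    using tail_prod_pos[OF G_0_nonneg G_0_less_G_1]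
    by (intro tendsto_divide tendsto_const has_prod_imp_tendsto' has_prod_tail_prod G_0_nonneg G_0_less_G_1) simp
  ultimately obtain n where n: "a < 1 / (\<Prod>j<n. 1 - G 0 / G (1 + j))"
    by (metis eventually_sequentially order_tendstoD(1) order.refl)
  show "\<forall>\<^sub>F t in at_top. a < exp (G 0 * t) * prob {\<omega>\<in>space M. ennreal t < tail_time 0 \<omega>}"
    using order_tendstoD(1)[OF scaled_prob_first_plus_psum_gt_tendsto n] eventually_ge_at_top[of 0]
  proof eventually_elim
    case (elim t)
    have "prob {\<omega>\<in>space M. t < \<sigma> 0 \<omega> + psum 1 n \<omega>} \<le> prob {\<omega>\<in>space M. ennreal t < tail_time 0 \<omega>}"
      using less_tail_time_iff_first[OF elim(2), of 0] by (intro finite_measure_mono) auto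
    then show ?case
      using elim(1) by (meson exp_ge_zero less_le_trans mult_left_mono)
  qed
qed

lemma cprob_first_plus_psum_le_tendsto:
  "((\<lambda>t. cprob M {\<omega>\<in>space M. \<sigma> 0 \<omega> + psum 1 n \<omega> \<le> t} {\<omega>\<in>space M. ennreal t < tail_time 0 \<omega>})
     \<longlongrightarrow> 1 - tail_prod (Suc n) (G 0)) at_top"
proof -
  define A where "A t = {\<omega>\<in>space M. t < \<sigma> 0 \<omega> + psum 1 n \<omega>}" for t
  define B where "B t = {\<omega>\<in>space M. ennreal t < tail_time 0 \<omega>}" for t
  have [measurable]: "A t \<in> sets M" "B t \<in> sets M" for t
    unfolding A_def B_def by measurable
  note G0 = G_0_nonneg G_0_less_G_1
  have "((\<lambda>t. 1 - (exp (G 0 * t) * measure M (A t)) / (exp (G 0 * t) * measure M (B t)))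
      \<longlongrightarrow> 1 - (1 / (\<Prod>j<n. 1 - G 0 / G (1 + j))) / (1 / tail_prod 1 (G 0))) at_top"
    unfolding A_def B_def using tail_prod_pos[OF G0]
    by (intro tendsto_intros scaled_prob_first_plus_psum_gt_tendsto scaled_prob_tail_time_gt_tendsto) auto
  also have "(1 / (\<Prod>j<n. 1 - G 0 / G (1 + j))) / (1 / tail_prod 1 (G 0)) = tail_prod (Suc n) (G 0)"
  proof -
    have "1 - G 0 / G (1 + j) \<noteq> 0" for j
      using tail_factor_pos[OF G_0_less_G_1, of j] by linarith
    then have "(\<Prod>j<n. 1 - G 0 / G (1 + j)) \<noteq> 0"
      by simp
    then show ?thesis
      using tail_prod_split[OF G0, of n] by simp
  qed
  finally have lim: "((\<lambda>t. 1 - (exp (G 0 * t) * measure M (A t)) / (exp (G 0 * t) * measure M (B t)))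
      \<longlongrightarrow> 1 - tail_prod (Suc n) (G 0)) at_top" .
  have "\<forall>\<^sub>F t in at_top. 1 - (exp (G 0 * t) * measure M (A t)) / (exp (G 0 * t) * measure M (B t))
      = cprob M {\<omega>\<in>space M. \<sigma> 0 \<omega> + psum 1 n \<omega> \<le> t} (B t)"
    using eventually_ge_at_top[of 0]
  proof eventually_elim
    case (elim t)
    have "A t \<subseteq> B t"
      unfolding A_def B_def using less_tail_time_iff_first[OF elim, of 0] by auto
    moreover have "{\<omega>\<in>space M. \<sigma> 0 \<omega> + psum 1 n \<omega> \<le> t} \<inter> B t = B t - A t"
      unfolding A_def B_def by auto
    moreover have "0 < measure M (B t)"
      using prob_tail_time_gt_ge[OF elim] exp_gt_zero[of "- G 0 * t"] unfolding B_def by linarith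
    ultimately show ?case
      by (simp add: cprob_def finite_measure_Diff field_simps)
  qed
  from Lim_transform_eventually[OF lim this] show ?thesis
    unfolding B_def .
qed

lemma nn_integral_indicator_psum_gt_exp_le:
  assumes "0 < s"
  shows "(\<integral>\<^sup>+\<omega>. indicator {s<..} (psum 1 n \<omega>) * ennreal (exp (G 0 * psum 1 n \<omega>)) \<partial>M)
       \<le> ennreal (decay_const * exp (- (G 1 - G 0) * s))"
proof (cases n)
  case 0
  then show ?thesis
    using assms by (simp add: psum_def)
next
  case (Suc m)
  have G1: "0 \<le> G 1" "G 1 < G 2"
    using G_pos[of 1] G_less[of 1 2] by auto
  define c where "c = G 1 / (G 1 - G 0) * exp (- (G 1 - G 0) * s)"
  have "0 \<le> c"
    using G_0_less_G_1 G_pos[of 1] by (simp add: c_def)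
  have "(\<integral>\<^sup>+\<omega>. indicator {s<..} (psum 1 n \<omega>) * ennreal (exp (G 0 * psum 1 n \<omega>)) \<partial>M)
      = (\<integral>\<^sup>+\<omega>. ennreal (G 1 / (G 1 - G 0) * exp (- (G 1 - G 0) * max 0 (s - psum 2 m \<omega>)) * exp (G 0 * psum 2 m \<omega>)) \<partial>M)"
    using nn_integral_exponential_add_indep[OF \<sigma>_exponential indep_var_psum[of 1 m] G_pos G_0_less_G_1,
        where h="\<lambda>_. 1" and a=s]
    by (simp add: Suc psum_Suc numeral_2_eq_2)
  also have "\<dots> \<le> (\<integral>\<^sup>+\<omega>. ennreal c * ennreal (exp (G 1 * psum 2 m \<omega>)) \<partial>M)"
  proof (intro nn_integral_mono)
    fix \<omega>
    define v where "v = psum 2 m \<omega>"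
    have "exp (- (G 1 - G 0) * max 0 (s - v)) \<le> exp (- (G 1 - G 0) * (s - v))"
      using G_0_less_G_1 by (simp add: mult_left_mono)
    then have "G 1 / (G 1 - G 0) * exp (- (G 1 - G 0) * max 0 (s - v)) * exp (G 0 * v)
        \<le> G 1 / (G 1 - G 0) * exp (- (G 1 - G 0) * (s - v)) * exp (G 0 * v)"
      using G_0_less_G_1 G_pos[of 1] by (intro mult_right_mono mult_left_mono) auto
    also have "\<dots> = c * exp (G 1 * v)"
      by (simp add: c_def mult.assoc exp_add[symmetric] algebra_simps)
    finally show "ennreal (G 1 / (G 1 - G 0) * exp (- (G 1 - G 0) * max 0 (s - psum 2 m \<omega>)) * exp (G 0 * psum 2 m \<omega>))
        \<le> ennreal c * ennreal (exp (G 1 * psum 2 m \<omega>))"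
      using \<open>0 \<le> c\<close> by (simp add: v_def ennreal_mult[symmetric] ennreal_leI)
  qed
  also have "\<dots> = ennreal c * ennreal (1 / (\<Prod>j<m. 1 - G 1 / G (2 + j)))"
    using integrable_exp_psum[of "G 1" 2 m] integral_exp_psum[of "G 1" 2 m] G1
    by (simp add: nn_integral_cmult nn_integral_eq_integral)
  also have "\<dots> \<le> ennreal c * ennreal (1 / tail_prod 2 (G 1))"
    using tail_prod_pos[OF G1] tail_prod_le[OF G1, of m]
    by (intro mult_left_mono ennreal_leI divide_left_mono) auto
  also have "\<dots> = ennreal (decay_const * exp (- (G 1 - G 0) * s))"
    using \<open>0 \<le> c\<close> tail_prod_pos[OF G1] by (simp add: c_def decay_const_def ennreal_mult[symmetric] field_simps)
  finally show ?thesis .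
qed

lemma prob_psum_gt_first_plus_psum_gt_le:
  assumes "0 < s"
  shows "prob {\<omega>\<in>space M. s < psum 1 n \<omega> \<and> t < \<sigma> 0 \<omega> + psum 1 n \<omega>}
       \<le> exp (- G 0 * t) * (decay_const * exp (- (G 1 - G 0) * s))"
proof -
  let ?C = "decay_const * exp (- (G 1 - G 0) * s)"
  have "emeasure M {\<omega>\<in>space M. s < psum 1 n \<omega> \<and> t < \<sigma> 0 \<omega> + psum 1 n \<omega>}
      = (\<integral>\<^sup>+\<omega>. indicator {s<..} (psum 1 n \<omega>) * ennreal (exp (- G 0 * max 0 (t - psum 1 n \<omega>))) \<partial>M)"
    using emeasure_exponential_add_indep_gt[OF \<sigma>_exponential indep_var_psum[of 0 n] G_pos,
        where B="{s<..}" and a=t]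
    by simp
  also have "\<dots> \<le> (\<integral>\<^sup>+\<omega>. ennreal (exp (- G 0 * t)) * (indicator {s<..} (psum 1 n \<omega>) * ennreal (exp (G 0 * psum 1 n \<omega>))) \<partial>M)"
  proof (intro nn_integral_mono)
    fix \<omega>
    have "G 0 * (t - psum 1 n \<omega>) \<le> G 0 * max 0 (t - psum 1 n \<omega>)"
      using G_pos[of 0] by (intro mult_left_mono) auto
    then have "exp (- G 0 * max 0 (t - psum 1 n \<omega>)) \<le> exp (- G 0 * t) * exp (G 0 * psum 1 n \<omega>)"
      by (simp add: exp_add[symmetric] algebra_simps)
    then show "indicator {s<..} (psum 1 n \<omega>) * ennreal (exp (- G 0 * max 0 (t - psum 1 n \<omega>)))
        \<le> ennreal (exp (- G 0 * t)) * (indicator {s<..} (psum 1 n \<omega>) * ennreal (exp (G 0 * psum 1 n \<omega>)))"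
      by (auto simp: indicator_def ennreal_mult[symmetric] ennreal_leI)
  qed
  also have "\<dots> = ennreal (exp (- G 0 * t)) * (\<integral>\<^sup>+\<omega>. indicator {s<..} (psum 1 n \<omega>) * ennreal (exp (G 0 * psum 1 n \<omega>)) \<partial>M)"
    by (rule nn_integral_cmult) measurable
  also have "\<dots> \<le> ennreal (exp (- G 0 * t)) * ennreal ?C"
    by (rule mult_left_mono[OF nn_integral_indicator_psum_gt_exp_le[OF assms]]) simp
  finally have "ennreal (prob {\<omega>\<in>space M. s < psum 1 n \<omega> \<and> t < \<sigma> 0 \<omega> + psum 1 n \<omega>})
      \<le> ennreal (exp (- G 0 * t) * ?C)"
    by (simp only: emeasure_eq_measure ennreal_mult' exp_ge_zero)
  moreover have "0 \<le> exp (- G 0 * t) * ?C"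
    using decay_const_pos by simp
  ultimately show ?thesis
    by (subst (asm) ennreal_le_iff) auto
qed

lemma cprob_tail_time_after_first_le:
  assumes "0 \<le> t" "0 < s"
  shows "cprob M {\<omega>\<in>space M. ennreal s < tail_time 1 \<omega>} {\<omega>\<in>space M. ennreal t < tail_time 0 \<omega>}
       \<le> decay_const * exp (- (G 1 - G 0) * s)"
proof -
  define C where "C = decay_const * exp (- (G 1 - G 0) * s)"
  define B where "B = {\<omega>\<in>space M. ennreal t < tail_time 0 \<omega>}"
  define Y where "Y = {\<omega>\<in>space M. ennreal s < tail_time 1 \<omega>}"
  define D where "D n = {\<omega>\<in>space M. s < psum 1 n \<omega> \<and> t < \<sigma> 0 \<omega> + psum 1 n \<omega>}" for n
  have [measurable]: "D n \<in> sets M" for n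
    unfolding D_def by measurable
  have YB: "Y \<inter> B = (\<Union>n. D n)"
  proof (intro equalityI subsetI)
    fix \<omega> assume "\<omega> \<in> Y \<inter> B"
    then obtain n m where "\<omega> \<in> space M" "s < psum 1 n \<omega>" "t < \<sigma> 0 \<omega> + psum 1 m \<omega>"
      unfolding Y_def B_def using assms less_tail_time_iff[of s 1] less_tail_time_iff_first[of t 0] by auto
    then show "\<omega> \<in> (\<Union>n. D n)"
      unfolding D_def using psum_mono[of n "max n m" 1 \<omega>] psum_mono[of m "max n m" 1 \<omega>]
      by (intro UN_I[of "max n m"]) auto
  qed (use assms less_tail_time_iff[of s 1] less_tail_time_iff_first[of t 0] in \<open>auto simp: Y_def B_def D_def\<close>)
  have "incseq D"
    unfolding incseq_def D_def using psum_mono by (auto intro: less_le_trans)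
  moreover have "measure M (D n) \<le> exp (- G 0 * t) * C" for n
    unfolding D_def C_def by (rule prob_psum_gt_first_plus_psum_gt_le[OF assms(2)])
  ultimately have "measure M (Y \<inter> B) \<le> exp (- G 0 * t) * C"
    unfolding YB by (intro measure_UN_incseq_le) auto
  moreover have "exp (- G 0 * t) \<le> measure M B"
    unfolding B_def by (rule prob_tail_time_gt_ge[OF assms(1)])
  moreover have "0 \<le> C"
    using decay_const_pos by (simp add: C_def)
  ultimately have "measure M (Y \<inter> B) \<le> measure M B * C"
    by (meson mult_right_mono order_trans)
  moreover have "0 < measure M B"
    using \<open>exp (- G 0 * t) \<le> measure M B\<close> exp_gt_zero[of "- G 0 * t"] by linarith
  ultimately show ?thesis
    unfolding cprob_def B_def[symmetric] Y_def[symmetric] C_def[symmetric]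
    by (simp add: divide_le_eq mult.commute)
qed

end

lemma summable_inverse_not_strict_antimono:
  fixes F :: "nat \<Rightarrow> real"
  assumes pos: "\<forall>k\<ge>1. F k > 0" and summable: "summable (\<lambda>k. 1 / F (k + 1))"
  shows "\<not> monotone_on {1..} (<) (>) F"
proof
  assume decreasing: "monotone_on {1..} (<) (>) F"
  have "(\<lambda>k. 1 / F (k + 1)) \<longlonglongrightarrow> 0"
    using summable by (rule summable_LIMSEQ_zero)
  then have "\<forall>\<^sub>F k in sequentially. 1 / F (k + 1) < 1 / F 1"
    using pos by (intro order_tendstoD(2)) auto
  then obtain k where k: "1 / F (k + 1) < 1 / F 1"
    by (auto simp: eventually_sequentially)
  have "F (k + 1) \<le> F 1"
    using monotone_onD[OF decreasing, of 1 "k + 1"] by (cases k) auto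
  then have "1 / F 1 \<le> 1 / F (k + 1)"
    using pos by (intro divide_left_mono) auto
  with k show False
    by simp
qed

lemma birth_Xi_gt_iff:
  "enat x < birth_Xi n0 \<tau> t \<omega> \<longleftrightarrow> (\<forall>k\<in>{n0..x}. (\<Sum>l=n0..k. \<tau> l \<omega>) \<le> t)"
proof (cases "\<exists>k\<ge>n0. (\<Sum>l=n0..k. \<tau> l \<omega>) > t")
  case True
  let ?P = "\<lambda>k. k \<ge> n0 \<and> (\<Sum>l=n0..k. \<tau> l \<omega>) > t"
  have "enat x < birth_Xi n0 \<tau> t \<omega> \<longleftrightarrow> x < (LEAST k. ?P k)"
    using True unfolding birth_Xi_def by simp
  also have "\<dots> \<longleftrightarrow> (\<forall>k\<le>x. \<not> ?P k)"
  proof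
    show "x < (LEAST k. ?P k) \<Longrightarrow> \<forall>k\<le>x. \<not> ?P k"
      using not_less_Least le_less_trans by blast
    show "\<forall>k\<le>x. \<not> ?P k \<Longrightarrow> x < (LEAST k. ?P k)"
      using LeastI_ex[OF True[unfolded Bex_def]] not_le by blast
  qed
  finally show ?thesis
    by (auto simp: not_less)
next
  case False
  then show ?thesis
    unfolding birth_Xi_def by (auto simp: not_less)
qed

locale birth_process = prob_space M for M :: "'a measure" +
  fixes F :: "nat \<Rightarrow> real" and \<tau> :: "nat \<Rightarrow> 'a \<Rightarrow> real" and n0 :: nat
  assumes F_pos: "\<And>k. 1 \<le> k \<Longrightarrow> 0 < F k" and F_strict_mono: "strict_mono_on {1..} F"
    and F_summable: "summable (\<lambda>k. 1 / F (k + 1))" and n0_pos: "1 \<le> n0"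
    and \<tau>_indep: "indep_vars (\<lambda>_. borel) \<tau> {n0..}"
    and \<tau>_exponential: "\<And>k. n0 \<le> k \<Longrightarrow> distributed M lborel (\<tau> k) (exponential_density (F k))"

text \<open>
  Exponential variables are nonnegative only almost surely; clipping them at \<open>0\<close> changes
  no event up to a null set and makes all partial sums monotone pointwise.
\<close>

sublocale birth_process \<subseteq> sojourns: exponential_sojourns M "\<lambda>j. F (n0 + j)" "\<lambda>j \<omega>. max 0 (\<tau> (n0 + j) \<omega>)"
proof
  show "0 < F (n0 + j)" for j
    using F_pos n0_pos by simp
  show "strict_mono (\<lambda>j. F (n0 + j))"
    using n0_pos by (auto simp: strict_mono_def intro!: strict_mono_onD[OF F_strict_mono])
  have "summable (\<lambda>k. 1 / F (k + (n0 - 1) + 1))"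
    using summable_ignore_initial_segment[OF F_summable, of "n0 - 1"] by simp
  then show "summable (\<lambda>j. 1 / F (n0 + j))"
    using n0_pos by (simp add: add.commute)
  have "range ((+) n0) = {n0..}"
    by (auto simp: image_iff le_iff_add)
  then have "indep_vars (\<lambda>_. borel) (\<lambda>k \<omega>. max 0 (\<tau> k \<omega>)) (range ((+) n0))"
    using indep_vars_compose2[OF \<tau>_indep, of "\<lambda>_. max 0" "\<lambda>_. borel"] by simp
  then show "indep_vars (\<lambda>_. borel) (\<lambda>j \<omega>. max 0 (\<tau> (n0 + j) \<omega>)) UNIV"
    using indep_vars_reindex[of "(+) n0" UNIV] by simp
  show "distributed M lborel (\<lambda>\<omega>. max 0 (\<tau> (n0 + j) \<omega>)) (exponential_density (F (n0 + j)))" for j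
    using F_pos n0_pos by (intro exponential_distributed_max_0 \<tau>_exponential) auto
qed simp

context birth_process
begin

lemma \<tau>_measurable: "n0 \<le> k \<Longrightarrow> \<tau> k \<in> borel_measurable M"
  using distributed_measurable[OF \<tau>_exponential] by simp

lemma birth_T_eq_tail_time: "birth_T n0 \<tau> \<omega> = sojourns.tail_time 0 \<omega>"
  unfolding birth_T_def sojourns.tail_time_def by (simp add: ennreal_max_0)

lemma birth_T_minus_first: "birth_T n0 \<tau> \<omega> - ennreal (\<tau> n0 \<omega>) = sojourns.tail_time 1 \<omega>"
proof -
  have "sojourns.tail_time 0 \<omega> = sojourns.tail_time 1 \<omega> + ennreal (max 0 (\<tau> n0 \<omega>))"
    unfolding sojourns.tail_time_def using suminf_offset[of "\<lambda>j. ennreal (max 0 (\<tau> (n0 + j) \<omega>))" 1]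
    by (simp add: ac_simps)
  then show ?thesis
    unfolding birth_T_eq_tail_time by (simp add: ennreal_max_0)
qed

lemma AE_birth_Xi_gt_iff:
  "AE \<omega> in M. enat (n0 + n) < birth_Xi n0 \<tau> t \<omega>
     \<longleftrightarrow> max 0 (\<tau> n0 \<omega>) + sojourns.psum 1 n \<omega> \<le> t"
proof -
  have "AE \<omega> in M. \<forall>k. n0 \<le> k \<longrightarrow> 0 \<le> \<tau> k \<omega>"
  proof (subst AE_all_countable, intro allI)
    show "AE \<omega> in M. n0 \<le> k \<longrightarrow> 0 \<le> \<tau> k \<omega>" for k
      using exponential_distributed_AE_nonneg[OF \<tau>_exponential[of k]] by (cases "n0 \<le> k") auto
  qed
  then show ?thesis
  proof eventually_elim
    case (elim \<omega>)
    have sum_eq: "(\<Sum>l=n0..n0 + n. \<tau> l \<omega>) = max 0 (\<tau> n0 \<omega>) + sojourns.psum 1 n \<omega>"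
    proof -
      have "(\<Sum>l=n0..n0 + n. \<tau> l \<omega>) = (\<Sum>j\<le>n. \<tau> (n0 + j) \<omega>)"
        using sum.shift_bounds_cl_nat_ivl[of "\<lambda>l. \<tau> l \<omega>" 0 n0 n] by (simp add: atLeast0AtMost ac_simps)
      also have "\<dots> = (\<Sum>j<Suc n. max 0 (\<tau> (n0 + j) \<omega>))"
        unfolding lessThan_Suc_atMost using elim by (intro sum.cong) auto
      finally show ?thesis
        using sojourns.psum_Suc[of 0 n \<omega>] by (simp add: sojourns.psum_def)
    qed
    have "(\<Sum>l=n0..k. \<tau> l \<omega>) \<le> (\<Sum>l=n0..n0 + n. \<tau> l \<omega>)" if "k \<in> {n0..n0 + n}" for k
      using that elim by (intro sum_mono2) auto
    then have "(\<forall>k\<in>{n0..n0 + n}. (\<Sum>l=n0..k. \<tau> l \<omega>) \<le> t) \<longleftrightarrow> (\<Sum>l=n0..n0 + n. \<tau> l \<omega>) \<le> t"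
      by (meson atLeastAtMost_iff le_add1 order.refl order_trans)
    then show ?case
      unfolding birth_Xi_gt_iff sum_eq .
  qed
qed

lemma cprob_birth_Xi_gt_tendsto:
  assumes "n0 \<le> x"
  shows "((\<lambda>t. cprob M {\<omega>\<in>space M. birth_Xi n0 \<tau> t \<omega> > enat x} {\<omega>\<in>space M. birth_T n0 \<tau> \<omega> > ennreal t})
           \<longlongrightarrow> 1 - (\<Prod>j. 1 - F n0 / F (x + 1 + j))) at_top"
proof -
  obtain n where x: "x = n0 + n"
    using assms le_iff_add by blast
  have [measurable]: "(\<lambda>\<omega>. \<Sum>l=n0..k. \<tau> l \<omega>) \<in> borel_measurable M" for k
    by (intro borel_measurable_sum) (auto intro: \<tau>_measurable)
  have [measurable]: "\<tau> n0 \<in> borel_measurable M"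
    by (rule \<tau>_measurable) simp
  have [measurable]: "{\<omega>\<in>space M. birth_Xi n0 \<tau> t \<omega> > enat x} \<in> sets M" for t
    unfolding birth_Xi_gt_iff by measurable
  have "measure M ({\<omega>\<in>space M. birth_Xi n0 \<tau> t \<omega> > enat x} \<inter> {\<omega>\<in>space M. birth_T n0 \<tau> \<omega> > ennreal t})
      = measure M ({\<omega>\<in>space M. max 0 (\<tau> n0 \<omega>) + sojourns.psum 1 n \<omega> \<le> t} \<inter> {\<omega>\<in>space M. ennreal t < sojourns.tail_time 0 \<omega>})" for t
    unfolding birth_T_eq_tail_time
  proof (rule measure_eq_AE)
    show "AE \<omega> in M. \<omega> \<in> {\<omega>\<in>space M. birth_Xi n0 \<tau> t \<omega> > enat x} \<inter> {\<omega>\<in>space M. ennreal t < sojourns.tail_time 0 \<omega>}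
        \<longleftrightarrow> \<omega> \<in> {\<omega>\<in>space M. max 0 (\<tau> n0 \<omega>) + sojourns.psum 1 n \<omega> \<le> t} \<inter> {\<omega>\<in>space M. ennreal t < sojourns.tail_time 0 \<omega>}"
      using AE_birth_Xi_gt_iff[of n t] by eventually_elim (auto simp: x)
  qed measurable
  moreover have "sojourns.tail_prod (Suc n) (F n0) = (\<Prod>j. 1 - F n0 / F (x + 1 + j))"
    unfolding sojourns.tail_prod_def x by (simp add: ac_simps)
  ultimately show ?thesis
    using sojourns.cprob_first_plus_psum_le_tendsto[of n]
    unfolding cprob_def birth_T_eq_tail_time by simp
qed

lemma birth_limit_in_unit_interval:
  assumes "n0 \<le> x"
  shows "1 - (\<Prod>j. 1 - F n0 / F (x + 1 + j)) \<in> {0<..<1}"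
proof -
  obtain n where x: "x = n0 + n"
    using assms le_iff_add by blast
  have "0 < F n0" "F n0 < F (n0 + Suc n)"
    using sojourns.G_pos[of 0] sojourns.G_less[of 0 "Suc n"] by simp_all
  then have "0 < sojourns.tail_prod (Suc n) (F n0)" "sojourns.tail_prod (Suc n) (F n0) < 1"
    using sojourns.tail_prod_pos[of "F n0" "Suc n"] sojourns.tail_prod_less_1[of "F n0" "Suc n"] by simp_all
  moreover have "sojourns.tail_prod (Suc n) (F n0) = (\<Prod>j. 1 - F n0 / F (x + 1 + j))"
    unfolding sojourns.tail_prod_def x by (simp add: ac_simps)
  ultimately show ?thesis
    by simp
qed

lemma cprob_birth_T_after_first_le:
  assumes "0 \<le> t" "0 < s"
  shows "cprob M {\<omega>\<in>space M. birth_T n0 \<tau> \<omega> - ennreal (\<tau> n0 \<omega>) > ennreal s}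
                 {\<omega>\<in>space M. birth_T n0 \<tau> \<omega> > ennreal t}
           \<le> sojourns.decay_const * exp (- (F (n0 + 1) - F n0) * s)"
  using sojourns.cprob_tail_time_after_first_le[OF assms]
  unfolding birth_T_minus_first unfolding birth_T_eq_tail_time by (simp only: add_0_right)

end

theorem proposition1:
  fixes M :: "'a measure" and F :: "nat \<Rightarrow> real" and \<tau> :: "nat \<Rightarrow> 'a \<Rightarrow> real" and n0 :: nat
  assumes "prob_space M"
    and Fpos: "\<forall>k\<ge>1. F k > 0"
    and Fmono: "strict_mono_on {1..} F \<or> monotone_on {1..} (<) (>) F"
    and Fsum: "summable (\<lambda>k. 1 / F (k + 1))"
    and n0: "n0 \<ge> 1"
    and indep: "prob_space.indep_vars M (\<lambda>_. borel) \<tau> {n0..}"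
    and expo: "\<forall>k\<ge>n0. distributed M lborel (\<tau> k) (exponential_density (F k))"
  shows "(\<forall>x\<ge>n0.
            ((\<lambda>t. cprob M {\<omega>\<in>space M. birth_Xi n0 \<tau> t \<omega> > enat x}
                           {\<omega>\<in>space M. birth_T n0 \<tau> \<omega> > ennreal t})
              \<longlongrightarrow> 1 - (\<Prod>j. 1 - F n0 / F (x + 1 + j))) at_top
          \<and> 1 - (\<Prod>j. 1 - F n0 / F (x + 1 + j)) \<in> {0<..<1})
       \<and> (\<exists>C t1. \<forall>t\<ge>t1. \<forall>s>0.
            cprob M {\<omega>\<in>space M. birth_T n0 \<tau> \<omega> - ennreal (\<tau> n0 \<omega>) > ennreal s}
                    {\<omega>\<in>space M. birth_T n0 \<tau> \<omega> > ennreal t}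
              \<le> C * exp (- (F (n0 + 1) - F n0) * s))"
proof -
  have "strict_mono_on {1..} F"
    using Fmono summable_inverse_not_strict_antimono[OF Fpos Fsum] by blast
  then interpret birth_process M F \<tau> n0
    using Fpos Fsum n0 indep expo by (intro birth_process.intro birth_process_axioms.intro assms(1)) auto
  have "\<forall>t\<ge>0. \<forall>s>0.
            cprob M {\<omega>\<in>space M. birth_T n0 \<tau> \<omega> - ennreal (\<tau> n0 \<omega>) > ennreal s}
                    {\<omega>\<in>space M. birth_T n0 \<tau> \<omega> > ennreal t}
              \<le> sojourns.decay_const * exp (- (F (n0 + 1) - F n0) * s)"
    using cprob_birth_T_after_first_le by blast
  moreover have "\<forall>x\<ge>n0.
            ((\<lambda>t. cprob M {\<omega>\<in>space M. birth_Xi n0 \<tau> t \<omega> > enat x}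
                           {\<omega>\<in>space M. birth_T n0 \<tau> \<omega> > ennreal t})
              \<longlongrightarrow> 1 - (\<Prod>j. 1 - F n0 / F (x + 1 + j))) at_top
          \<and> 1 - (\<Prod>j. 1 - F n0 / F (x + 1 + j)) \<in> {0<..<1}"
    using cprob_birth_Xi_gt_tendsto birth_limit_in_unit_interval by simp
  ultimately show ?thesis
    by blast
qed

end
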